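(* $\Sigma=\bigcup_{n\ge0}(\mathcal S_n\cup\mathcal S'_n)=\mathcal S\cap\mathcal R^4$, where $\mathcal S$ is the unit sphere of $\mathbb{R}^4$.
   Context: Let $\tau=(1+\sqrt5)/2$, $\tau'=(1-\sqrt5)/2$, and $\mathcal R=\mathbb{Z}[\frac12,\tau]=\{(a+b\tau)/2^n: a,b\in\mathbb{Z},\ n\ge0\}$. Let $\Delta\subset\mathbb{R}^4$ be the set of 120 vectors consisting of: the 8 vectors obtained from $(\pm1,0,0,0)$ by permuting coordinates; the 16 vectors $\frac12(\pm1,\pm1,\pm1,\pm1)$; and the 96 vectors obtained from $\frac12(0,\pm1,\pm\tau',\pm\tau)$ (all sign choices) by even permutations of the coordinates. Let $\Delta'$ be the image of $\Delta$ under the Galois conjugation $\tau\leftrightarrow\tau'$ applied to each coordinate. For a unit vector $a$, $r_a(x)=x-2(x\cdot a)a$. Let $H^\infty$ be the group generated by all $r_a$, $a\in\Delta\cup\Delta'$, and $\Sigma=\{w(a): w\in H^\infty,\ a\in\Delta\cup\Delta'\}$. Let $\mathbb F_4=\mathbb{Z}[\tau]/2\mathbb{Z}[\tau]$, $\bar y$ the coordinatewise reduction of $y\in\mathbb{Z}[\tau]^4$, $A\subset\mathbb F_4^4$ the span of $(\bar1,\bar1,\bar1,\bar1)$ and $(\bar0,\bar1,\bar{\tau'},\bar\tau)$, $A'$ the span of $(\bar1,\bar1,\bar1,\bar1)$ and $(\bar0,\bar1,\bar\tau,\bar{\tau'})$. For $n\ge1$, $\mathcal S_n=\{x\in2^{-n}\mathbb{Z}[\tau]^4: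 x\cdot x=1,\ \overline{2^nx}\in A\setminus\{0\}\}$, $\mathcal S'_n$ likewise with $A'$; and $\mathcal S_0=\mathcal S'_0$ is the set of 8 vectors obtained from $(\pm1,0,0,0)$ by permuting coordinates. *)

theory Defs
  imports "HOL-Analysis.Analysis" "HOL-Combinatorics.Permutations"
begin

definition tau :: real where "tau = (1 + sqrt 5) / 2"
definition tau' :: real where "tau' = (1 - sqrt 5) / 2"

definition Ztau :: "real set" where
  "Ztau = {of_int a + of_int b * tau | a b. True}"

definition Rring :: "real set" where
  "Rring = {(of_int a + of_int b * tau) / 2 ^ n | a b n. True}"

definition refl :: "real^4 \<Rightarrow> real^4 \<Rightarrow> real^4" where
  "refl a x = x - (2 * (x \<bullet> a)) *\<^sub>R a"

text \<open>The 120-vector configuration built with the pair (t,t'); Delta uses (tau,tau'),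
  its Galois conjugate Delta' uses (tau',tau) (conjugation fixes the rational entries).\<close>
definition DeltaGen :: "real \<Rightarrow> real \<Rightarrow> (real^4) set" where
  "DeltaGen t t' =
     {x. \<exists>i s. s \<in> {-1, 1} \<and> x = (\<chi> j. if j = i then s else 0)}
   \<union> {x. \<forall>j. x $ j \<in> {-1/2, 1/2}}
   \<union> {x. \<exists>p s. p permutes (UNIV :: 4 set) \<and> evenperm p \<and> (\<forall>j. s j \<in> {-1::real, 1}) \<and>
          x = (\<chi> j. s j * ((vector [0, 1/2, t'/2, t/2] :: real^4) $ p j))}"

definition Delta :: "(real^4) set" where "Delta = DeltaGen tau tau'"
definition Delta' :: "(real^4) set" where "Delta' = DeltaGen tau' tau"

text \<open>H^infinity: the group generated by the reflections r_a, a in Delta \<union> Delta'.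
  Since the generators are involutions, the generated monoid is the generated group.\<close>
inductive_set Hinf :: "(real^4 \<Rightarrow> real^4) set" where
  Hinf_id: "id \<in> Hinf"
| Hinf_step: "w \<in> Hinf \<Longrightarrow> a \<in> Delta \<union> Delta' \<Longrightarrow> refl a \<circ> w \<in> Hinf"

definition Sigma :: "(real^4) set" where
  "Sigma = {w a | w a. w \<in> Hinf \<and> a \<in> Delta \<union> Delta'}"

text \<open>Congruence modulo 2 Z[tau]^4: y and z have the same coordinatewise reduction in F_4 = Z[tau]/2Z[tau].\<close>
definition cong2 :: "real^4 \<Rightarrow> real^4 \<Rightarrow> bool" where
  "cong2 y z \<longleftrightarrow> (\<forall>i. (y $ i - z $ i) / 2 \<in> Ztau)"

text \<open>For y in Z[tau]^4: the reduction of y lies in the F_4-span of (1,1,1,1) and (0,1,t',t),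
  and is nonzero. (F_4-scalars are lifted to Z[tau].)\<close>
definition inAred :: "real \<Rightarrow> real \<Rightarrow> real^4 \<Rightarrow> bool" where
  "inAred t t' y \<longleftrightarrow>
     (\<exists>\<alpha>\<in>Ztau. \<exists>\<beta>\<in>Ztau. cong2 y (\<alpha> *\<^sub>R vector [1,1,1,1] + \<beta> *\<^sub>R vector [0,1,t',t]))
     \<and> \<not> cong2 y 0"

definition S0 :: "(real^4) set" where
  "S0 = {x. \<exists>i s. s \<in> {-1, 1} \<and> x = (\<chi> j. if j = i then s else 0)}"

definition SGen :: "real \<Rightarrow> real \<Rightarrow> nat \<Rightarrow> (real^4) set" where
  "SGen t t' n = (if n = 0 then S0 else
     {x. (\<forall>i. 2 ^ n * x $ i \<in> Ztau) \<and> x \<bullet> x = 1 \<and> inAred t t' ((2 ^ n) *\<^sub>R x)})"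

definition S :: "nat \<Rightarrow> (real^4) set" where "S n = SGen tau tau' n"
definition S' :: "nat \<Rightarrow> (real^4) set" where "S' n = SGen tau' tau n"

end

theory Submission
  imports Defs
begin

text \<open>Write a unit vector \<open>x \<in> \<R>\<^sup>4\<close> as \<open>2\<^sup>-\<^sup>k y\<close> with \<open>y \<in> \<int>[\<tau>]\<^sup>4\<close>, so that \<open>y \<bullet> y = 4\<^sup>k\<close>,
  and induct on \<open>k\<close>. If \<open>y \<not>\<equiv> 0 (mod 2)\<close>, then \<open>y \<bullet> y \<equiv> 0 (mod 4)\<close>, and a finite check on the
  \<open>4\<^sup>4\<close> residues shows that the reduction of \<open>y\<close> lies in \<open>A \<union> A'\<close>; this gives the description by
  the \<open>\<S>\<^sub>n, \<S>'\<^sub>n\<close>. A second finite check shows that, unless it lies on the line of \<open>(1,1,1,1)\<close>,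
  the reduction has four distinct coordinates, so \<open>y \<equiv> 2a\<close> for a root \<open>a\<close> obtained by permuting
  \<open>\<onehalf>(0, 1, \<tau>', \<tau>)\<close>. Changing one sign of \<open>a\<close> achieves \<open>y \<bullet> a \<equiv> 1\<close>, and then
  \<open>r\<^sub>a(y) = y - (y \<bullet> a) 2a \<equiv> 0 (mod 2)\<close>, which lowers \<open>k\<close>; a residue on the line of \<open>(1,1,1,1)\<close> is
  first moved off it by the reflection in \<open>\<onehalf>(0, \<plusminus>1, \<tau>', \<tau>)\<close>. At \<open>k = 0\<close> the vector is
  \<open>\<plusminus>e\<^sub>i \<in> \<Delta>\<close>, so \<open>x\<close> is the image of a root under \<open>H\<^sup>\<infinity>\<close>.\<close>

section \<open>The ring \<open>\<int>[\<tau>]\<close>\<close>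

lemma tau_squared: "tau * tau = tau + 1"
  unfolding tau_def by (simp add: field_simps)

lemma tau'_eq: "tau' = 1 - tau"
  unfolding tau_def tau'_def by (simp add: field_simps)

lemma tau_plus_tau': "tau + tau' = 1"
  unfolding tau'_eq by simp

lemma tau_times_tau': "tau * tau' = -1"
  unfolding tau'_eq using tau_squared by (simp add: algebra_simps)

lemma tau_squares_sum: "tau * tau + tau' * tau' = 3"
  unfolding tau'_eq using tau_squared by (simp add: algebra_simps)

lemma tau_gt_1: "1 < tau"
  unfolding tau_def by simp

lemma tau'_lt_0: "tau' < 0"
  unfolding tau'_def by simp

text \<open>Elements \<open>a + b\<tau>\<close> of \<open>\<int>[\<tau>]\<close> are encoded as integer pairs \<open>(a, b)\<close>, so that finite
  checks on residues can be carried out by evaluation.\<close>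

type_synonym ztau = "int \<times> int"

type_synonym ztau4 = "ztau \<times> ztau \<times> ztau \<times> ztau"

definition of_ztau :: "ztau \<Rightarrow> real" where
  "of_ztau p = of_int (fst p) + of_int (snd p) * tau"

lemma golden_norm_eq_0:
  fixes a b :: int
  assumes "a^2 + a*b = b^2"
  shows "a = 0 \<and> b = 0"
  using assms
proof (induction "nat \<bar>a\<bar> + nat \<bar>b\<bar>" arbitrary: a b rule: less_induct)
  case less
  have "even a \<and> even b"
  proof (rule ccontr)
    assume "\<not> (even a \<and> even b)"
    then have "odd (a^2 + a*b - b^2)"
      by (cases "even a"; cases "even b") (auto simp: power2_eq_square)
    with less.prems show False by simp
  qed
  then obtain a' b' where ab: "a = 2 * a'" "b = 2 * b'" by (auto elim!: evenE)
  with less.prems have eq': "a'^2 + a'*b' = b'^2" by (simp add: power_mult_distrib algebra_simps)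
  show ?case
  proof (rule ccontr)
    assume "\<not> (a = 0 \<and> b = 0)"
    then have "nat \<bar>a'\<bar> + nat \<bar>b'\<bar> < nat \<bar>a\<bar> + nat \<bar>b\<bar>" using ab by auto
    from less.hyps[OF this eq'] have "a' = 0 \<and> b' = 0" .
    with ab \<open>\<not> (a = 0 \<and> b = 0)\<close> show False by simp
  qed
qed

text \<open>Injectivity of \<^const>\<open>of_ztau\<close> comes from the norm \<open>(a + b\<tau>)(a + b\<tau>') = a\<^sup>2 + ab - b\<^sup>2\<close>,
  which has no nontrivial integer zeros.\<close>

lemma of_ztau_eq_0_iff: "of_ztau p = 0 \<longleftrightarrow> p = (0, 0)"
proof
  assume h: "of_ztau p = 0"
  obtain a b where p: "p = (a, b)" by (cases p)
  have "of_ztau p * (of_int a + of_int b * tau')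
      = of_int a * of_int a + of_int a * of_int b * (tau + tau') + of_int b * of_int b * (tau * tau')"
    unfolding p of_ztau_def by (simp add: algebra_simps)
  also have "\<dots> = of_int (a^2 + a*b - b^2)"
    unfolding tau_plus_tau' tau_times_tau' by (simp add: power2_eq_square)
  finally have "of_ztau p * (of_int a + of_int b * tau') = of_int (a^2 + a*b - b^2)" .
  with h have "of_int (a^2 + a*b - b^2) = (0::real)" by simp
  then have "a^2 + a*b - b^2 = 0" by (simp only: of_int_eq_0_iff)
  then show "p = (0, 0)" using golden_norm_eq_0[of a b] p by simp
qed (simp add: of_ztau_def)

lemma of_ztau_inject: "of_ztau p = of_ztau q \<longleftrightarrow> p = q"
proof
  assume "of_ztau p = of_ztau q"
  then have "of_ztau (fst p - fst q, snd p - snd q) = 0" by (simp add: of_ztau_def algebra_simps)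
  then show "p = q" by (simp add: of_ztau_eq_0_iff prod_eq_iff)
qed simp

fun ztau_add :: "ztau \<Rightarrow> ztau \<Rightarrow> ztau" where
  "ztau_add (a, b) (c, d) = (a + c, b + d)"

text \<open>Multiplication uses \<open>\<tau>\<^sup>2 = \<tau> + 1\<close>.\<close>

fun ztau_mul :: "ztau \<Rightarrow> ztau \<Rightarrow> ztau" where
  "ztau_mul (a, b) (c, d) = (a * c + b * d, a * d + b * c + b * d)"

fun ztau_mod2 :: "ztau \<Rightarrow> ztau" where
  "ztau_mod2 (a, b) = (a mod 2, b mod 2)"

lemma of_ztau_add: "of_ztau (ztau_add p q) = of_ztau p + of_ztau q"
  by (cases p; cases q) (simp add: of_ztau_def algebra_simps)

lemma of_ztau_mul: "of_ztau (ztau_mul p q) = of_ztau p * of_ztau q"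
proof (cases p; cases q)
  fix a b c d assume pq: "p = (a, b)" "q = (c, d)"
  have "of_ztau p * of_ztau q = of_int (a*c) + of_int (a*d + b*c) * tau + of_int (b*d) * (tau * tau)"
    unfolding pq of_ztau_def by (simp add: algebra_simps)
  also have "\<dots> = of_ztau (ztau_mul p q)"
    unfolding pq tau_squared of_ztau_def by (simp add: algebra_simps)
  finally show ?thesis by simp
qed

lemma Ztau_iff: "r \<in> Ztau \<longleftrightarrow> (\<exists>p. r = of_ztau p)"
  unfolding Ztau_def of_ztau_def by force

lemma of_ztau_in_Ztau [simp]: "of_ztau p \<in> Ztau"
  using Ztau_iff by blast

lemma Ztau_add [intro]: "x \<in> Ztau \<Longrightarrow> y \<in> Ztau \<Longrightarrow> x + y \<in> Ztau"
  by (metis Ztau_iff of_ztau_add)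

lemma Ztau_mult [intro]: "x \<in> Ztau \<Longrightarrow> y \<in> Ztau \<Longrightarrow> x * y \<in> Ztau"
  by (metis Ztau_iff of_ztau_mul)

lemma Ztau_of_int [simp, intro]: "of_int k \<in> Ztau"
  unfolding Ztau_def by (rule CollectI, rule exI[of _ k], rule exI[of _ 0]) simp

lemma Ztau_numeral [simp, intro]: "numeral k \<in> Ztau" "- numeral k \<in> Ztau" "0 \<in> Ztau" "1 \<in> Ztau" "-1 \<in> Ztau"
  using Ztau_of_int[of "numeral k"] Ztau_of_int[of "- numeral k"] Ztau_of_int[of 0] Ztau_of_int[of 1]
    Ztau_of_int[of "-1"] by simp_all

lemma Ztau_minus [intro]: "x \<in> Ztau \<Longrightarrow> - x \<in> Ztau"
  using Ztau_mult[of "-1" x] Ztau_of_int[of "-1"] by simp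

lemma Ztau_diff [intro]: "x \<in> Ztau \<Longrightarrow> y \<in> Ztau \<Longrightarrow> x - y \<in> Ztau"
  using Ztau_add[of x "- y"] Ztau_minus by simp

lemma Ztau_power [intro]: "x \<in> Ztau \<Longrightarrow> x ^ n \<in> Ztau"
  by (induction n) auto

lemma Ztau_sum [intro]: "(\<And>i. i \<in> A \<Longrightarrow> f i \<in> Ztau) \<Longrightarrow> sum f A \<in> Ztau"
  by (induction A rule: infinite_finite_induct) auto

lemma Ztau_tau [simp, intro]: "tau \<in> Ztau"
  using of_ztau_in_Ztau[of "(0, 1)"] by (simp add: of_ztau_def)

lemma Ztau_tau' [simp, intro]: "tau' \<in> Ztau"
  unfolding tau'_eq by blast

lemma of_ztau_div_in_Ztau_iff:
  assumes "m \<noteq> 0"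
  shows "of_ztau p / of_int m \<in> Ztau \<longleftrightarrow> m dvd fst p \<and> m dvd snd p"
proof
  assume "of_ztau p / of_int m \<in> Ztau"
  then obtain c d where "of_ztau p / of_int m = of_ztau (c, d)" by (metis Ztau_iff surj_pair)
  then have "of_ztau p = of_ztau (m * c, m * d)" using assms by (simp add: of_ztau_def field_simps)
  then show "m dvd fst p \<and> m dvd snd p" by (simp add: of_ztau_inject)
next
  assume "m dvd fst p \<and> m dvd snd p"
  then obtain c d where "fst p = m * c" "snd p = m * d" by (auto elim!: dvdE)
  then have "of_ztau p / of_int m = of_ztau (c, d)" using assms by (simp add: of_ztau_def field_simps)
  then show "of_ztau p / of_int m \<in> Ztau" by simp
qed

definition rcong2 :: "real \<Rightarrow> real \<Rightarrow> bool" where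
  "rcong2 a b \<longleftrightarrow> (a - b) / 2 \<in> Ztau"

lemma rcong2_refl [simp]: "rcong2 a a"
  by (simp add: rcong2_def)

lemma rcong2_sym: "rcong2 a b \<Longrightarrow> rcong2 b a"
  unfolding rcong2_def using Ztau_minus[of "(a - b) / 2"] by (simp add: diff_divide_distrib)

lemma rcong2_trans [trans]: "rcong2 a b \<Longrightarrow> rcong2 b c \<Longrightarrow> rcong2 a c"
  unfolding rcong2_def using Ztau_add[of "(a - b) / 2" "(b - c) / 2"] by (simp add: diff_divide_distrib)

lemma rcong2_diff: "rcong2 a b \<Longrightarrow> rcong2 c d \<Longrightarrow> rcong2 (a - c) (b - d)"
  unfolding rcong2_def using Ztau_diff[of "(a - b) / 2" "(c - d) / 2"]
  by (simp add: diff_divide_distrib add_divide_distrib algebra_simps)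

lemma rcong2_mult:
  assumes "rcong2 a b" "rcong2 c d" "b \<in> Ztau" "c \<in> Ztau"
  shows "rcong2 (a * c) (b * d)"
proof -
  have "(a - b) / 2 * c + b * ((c - d) / 2) \<in> Ztau" using assms unfolding rcong2_def by blast
  moreover have "(a - b) / 2 * c + b * ((c - d) / 2) = (a * c - b * d) / 2" by (simp add: field_simps)
  ultimately show ?thesis unfolding rcong2_def by metis
qed

lemma of_ztau_mod2_rcong2: "rcong2 (of_ztau p) (of_ztau (ztau_mod2 p))"
proof (cases p)
  case (Pair a b)
  have "(of_ztau p - of_ztau (ztau_mod2 p)) / 2 = of_ztau (a - a mod 2, b - b mod 2) / of_int 2"
    unfolding Pair of_ztau_def by (simp add: algebra_simps)
  then show ?thesis unfolding rcong2_def
    by (simp only: of_ztau_div_in_Ztau_iff) (simp add: minus_mod_eq_mult_div[symmetric])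
qed

definition ztau_residues :: "ztau list" where
  "ztau_residues = [(0, 0), (1, 0), (0, 1), (1, 1)]"

lemma ztau_mod2_in_residues: "ztau_mod2 p \<in> set ztau_residues"
proof (cases p)
  case (Pair a b)
  have "a mod 2 = 0 \<or> a mod 2 = 1" "b mod 2 = 0 \<or> b mod 2 = 1" by auto
  then show ?thesis unfolding Pair ztau_residues_def by auto
qed

lemma Ztau_residue_classes:
  assumes "s \<in> Ztau"
  shows "rcong2 s 0 \<or> rcong2 s 1 \<or> rcong2 s tau \<or> rcong2 s (tau * tau)"
proof -
  obtain p where p: "s = of_ztau p" using assms Ztau_iff by blast
  have "rcong2 s (of_ztau (ztau_mod2 p))" unfolding p by (rule of_ztau_mod2_rcong2)
  moreover have "of_ztau (ztau_mod2 p) \<in> {0, 1, tau, tau * tau}"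
    using ztau_mod2_in_residues[of p] by (auto simp: ztau_residues_def of_ztau_def tau_squared)
  ultimately show ?thesis by auto
qed

lemma Ztau_residues_squares: "\<forall>s\<in>Ztau. \<exists>c\<in>{0, 1, tau^2, tau'^2}. rcong2 s c"
proof
  fix s assume "s \<in> Ztau"
  moreover have "(tau - tau'^2) / 2 = tau - 1"
    unfolding tau'_eq power2_eq_square using tau_squared by (simp add: field_simps)
  then have "rcong2 tau (tau'^2)" unfolding rcong2_def by (simp only:) blast
  ultimately have "rcong2 s 0 \<or> rcong2 s 1 \<or> rcong2 s (tau'^2) \<or> rcong2 s (tau^2)"
    using Ztau_residue_classes rcong2_trans[of s tau "tau'^2"] by (auto simp: power2_eq_square)
  then show "\<exists>c\<in>{0, 1, tau^2, tau'^2}. rcong2 s c" by blast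
qed

definition Ztau4 :: "(real^4) set" where
  "Ztau4 = {v. \<forall>i. v $ i \<in> Ztau}"

lemma Ztau4_add [intro]: "x \<in> Ztau4 \<Longrightarrow> y \<in> Ztau4 \<Longrightarrow> x + y \<in> Ztau4"
  by (auto simp: Ztau4_def)

lemma Ztau4_diff [intro]: "x \<in> Ztau4 \<Longrightarrow> y \<in> Ztau4 \<Longrightarrow> x - y \<in> Ztau4"
  by (auto simp: Ztau4_def)

lemma Ztau4_scaleR [intro]: "c \<in> Ztau \<Longrightarrow> x \<in> Ztau4 \<Longrightarrow> c *\<^sub>R x \<in> Ztau4"
  by (auto simp: Ztau4_def)

lemma Ztau4_inner [intro]: "x \<in> Ztau4 \<Longrightarrow> y \<in> Ztau4 \<Longrightarrow> x \<bullet> y \<in> Ztau"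
  by (auto simp: Ztau4_def inner_vec_def)

lemma cong2_iff_rcong2: "cong2 y z \<longleftrightarrow> (\<forall>i. rcong2 (y $ i) (z $ i))"
  by (simp add: cong2_def rcong2_def)

lemma cong2_iff_Ztau4: "cong2 y z \<longleftrightarrow> (1/2) *\<^sub>R (y - z) \<in> Ztau4"
  by (simp add: cong2_def Ztau4_def)

lemma cong2_sym: "cong2 y z \<Longrightarrow> cong2 z y"
  by (auto simp: cong2_iff_rcong2 intro: rcong2_sym)

lemma cong2_trans [trans]: "cong2 x y \<Longrightarrow> cong2 y z \<Longrightarrow> cong2 x z"
  by (auto simp: cong2_iff_rcong2 intro: rcong2_trans)

lemma vector4_nth [simp]:
  "(vector [a, b, c, d] :: 'a::zero^4) $ 1 = a"
  "(vector [a, b, c, d] :: 'a::zero^4) $ 2 = b"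
  "(vector [a, b, c, d] :: 'a::zero^4) $ 3 = c"
  "(vector [a, b, c, d] :: 'a::zero^4) $ 4 = d"
  by (simp_all add: vector_def)

lemma vec4_eq_iff: "(x::'a^4) = y \<longleftrightarrow> x $ 1 = y $ 1 \<and> x $ 2 = y $ 2 \<and> x $ 3 = y $ 3 \<and> x $ 4 = y $ 4"
  by (simp add: vec_eq_iff forall_4)

lemma inner4: "(x::real^4) \<bullet> y = x $ 1 * y $ 1 + x $ 2 * y $ 2 + x $ 3 * y $ 3 + x $ 4 * y $ 4"
  by (simp add: inner_vec_def sum_4)

lemma ones_nth [simp]: "(vector [1, 1, 1, 1] :: real^4) $ i = 1"
  using exhaust_4[of i] by auto

lemma cong2_ones_nth: "cong2 y (c *\<^sub>R vector [1, 1, 1, 1]) \<Longrightarrow> rcong2 (y $ i) c"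
  by (auto simp: cong2_iff_rcong2)

fun of_ztau4 :: "ztau4 \<Rightarrow> real^4" where
  "of_ztau4 (a, b, c, d) = vector [of_ztau a, of_ztau b, of_ztau c, of_ztau d]"

fun ztau4_add :: "ztau4 \<Rightarrow> ztau4 \<Rightarrow> ztau4" where
  "ztau4_add (a, b, c, d) (a', b', c', d') = (ztau_add a a', ztau_add b b', ztau_add c c', ztau_add d d')"

fun ztau4_scale :: "ztau \<Rightarrow> ztau4 \<Rightarrow> ztau4" where
  "ztau4_scale k (a, b, c, d) = (ztau_mul k a, ztau_mul k b, ztau_mul k c, ztau_mul k d)"

fun ztau4_dot :: "ztau4 \<Rightarrow> ztau4 \<Rightarrow> ztau" where
  "ztau4_dot (a, b, c, d) (a', b', c', d') =
     ztau_add (ztau_add (ztau_mul a a') (ztau_mul b b')) (ztau_add (ztau_mul c c') (ztau_mul d d'))"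

fun ztau4_mod2 :: "ztau4 \<Rightarrow> ztau4" where
  "ztau4_mod2 (a, b, c, d) = (ztau_mod2 a, ztau_mod2 b, ztau_mod2 c, ztau_mod2 d)"

fun ztau4_entries :: "ztau4 \<Rightarrow> ztau list" where
  "ztau4_entries (a, b, c, d) = [a, b, c, d]"

lemma of_ztau4_add: "of_ztau4 (ztau4_add p q) = of_ztau4 p + of_ztau4 q"
  by (cases p rule: prod_cases4; cases q rule: prod_cases4) (auto simp: vec4_eq_iff of_ztau_add)

lemma of_ztau4_scale: "of_ztau4 (ztau4_scale k p) = of_ztau k *\<^sub>R of_ztau4 p"
  by (cases p rule: prod_cases4) (auto simp: vec4_eq_iff of_ztau_mul)

lemma of_ztau4_dot: "of_ztau4 p \<bullet> of_ztau4 q = of_ztau (ztau4_dot p q)"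
  by (cases p rule: prod_cases4; cases q rule: prod_cases4) (auto simp: inner4 of_ztau_add of_ztau_mul)

lemma of_ztau4_in_Ztau4 [simp]: "of_ztau4 p \<in> Ztau4"
  by (cases p rule: prod_cases4) (auto simp: Ztau4_def forall_4)

lemma Ztau4_iff: "v \<in> Ztau4 \<longleftrightarrow> (\<exists>p. v = of_ztau4 p)"
proof
  assume "v \<in> Ztau4"
  then have "\<forall>i. \<exists>p. v $ i = of_ztau p" unfolding Ztau4_def Ztau_iff by blast
  then obtain f where "\<And>i. v $ i = of_ztau (f i)" by metis
  then have "v = of_ztau4 (f 1, f 2, f 3, f 4)" by (simp add: vec4_eq_iff)
  then show "\<exists>p. v = of_ztau4 p" by blast
qed (use of_ztau4_in_Ztau4 in blast)

lemma of_ztau4_mod2_cong2: "cong2 (of_ztau4 p) (of_ztau4 (ztau4_mod2 p))"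
  by (cases p rule: prod_cases4) (simp add: cong2_iff_rcong2 forall_4 of_ztau_mod2_rcong2 del: ztau_mod2.simps)

definition ztau4_residues :: "ztau4 list" where
  "ztau4_residues = [(a, b, c, d). a \<leftarrow> ztau_residues, b \<leftarrow> ztau_residues, c \<leftarrow> ztau_residues, d \<leftarrow> ztau_residues]"

lemma ztau4_mod2_in_residues: "ztau4_mod2 p \<in> set ztau4_residues"
  using ztau_mod2_in_residues by (cases p rule: prod_cases4) (fastforce simp: ztau4_residues_def simp del: ztau_mod2.simps)

section \<open>Isotropic residues modulo 2\<close>

definition ztau4_zero :: ztau4 where
  "ztau4_zero = ((0, 0), (0, 0), (0, 0), (0, 0))"

definition dot_self_dvd4 :: "ztau4 \<Rightarrow> bool" where
  "dot_self_dvd4 q \<longleftrightarrow> 4 dvd fst (ztau4_dot q q) \<and> 4 dvd snd (ztau4_dot q q)"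

fun constant4 :: "ztau4 \<Rightarrow> bool" where
  "constant4 (a, b, c, d) \<longleftrightarrow> a = b \<and> a = c \<and> a = d"

definition ones4 :: ztau4 where
  "ones4 = ((1, 0), (1, 0), (1, 0), (1, 0))"

lemma of_ztau4_ones4: "of_ztau4 ones4 = vector [1, 1, 1, 1]"
  by (simp add: ones4_def of_ztau_def)

definition in_residue_span :: "ztau4 \<Rightarrow> ztau4 \<Rightarrow> bool" where
  "in_residue_span u q \<longleftrightarrow>
     (\<exists>\<alpha>\<in>set ztau_residues. \<exists>\<beta>\<in>set ztau_residues.
        ztau4_mod2 (ztau4_add (ztau4_scale \<alpha> ones4) (ztau4_scale \<beta> u)) = q)"

text \<open>Below, \<open>((0,0), (1,0), (1,-1), (0,1))\<close> encodes \<open>(0, 1, \<tau>', \<tau>)\<close>, whose reduction spans \<open>A\<close> together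
  with that of \<open>(1,1,1,1)\<close>; swapping the last two entries gives \<open>A'\<close>.\<close>

lemma isotropic_residues_in_A:
  "list_all (\<lambda>q. q \<noteq> ztau4_zero \<and> dot_self_dvd4 q \<longrightarrow>
      in_residue_span ((0, 0), (1, 0), (1, -1), (0, 1)) q \<or> in_residue_span ((0, 0), (1, 0), (0, 1), (1, -1)) q)
    ztau4_residues"
  by code_simp

lemma isotropic_residues_distinct:
  "list_all (\<lambda>q. q \<noteq> ztau4_zero \<and> dot_self_dvd4 q \<and> \<not> constant4 q \<longrightarrow> distinct (ztau4_entries q))
    ztau4_residues"
  by code_simp

lemma inner_self_div4_if_cong2:
  assumes "y \<in> Ztau4" "cong2 y z" "(y \<bullet> y) / 4 \<in> Ztau"
  shows "(z \<bullet> z) / 4 \<in> Ztau"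
proof -
  define e where "e = (1/2) *\<^sub>R (y - z)"
  have e: "e \<in> Ztau4" using assms(2) by (simp add: e_def cong2_iff_Ztau4)
  have "z = y - 2 *\<^sub>R e" by (simp add: e_def)
  then have eq: "(z \<bullet> z) / 4 = (y \<bullet> y) / 4 - y \<bullet> e + e \<bullet> e"
    by (simp add: inner_diff_left inner_diff_right inner_commute)
  show ?thesis unfolding eq using assms(1,3) e by blast
qed

lemma Ztau4_isotropic_residue:
  assumes "y \<in> Ztau4" "(y \<bullet> y) / 4 \<in> Ztau" "\<not> cong2 y 0"
  obtains q where "q \<in> set ztau4_residues" "q \<noteq> ztau4_zero" "dot_self_dvd4 q" "cong2 y (of_ztau4 q)"
proof -
  obtain p where p: "y = of_ztau4 p" using assms(1) Ztau4_iff by blast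
  define q where "q = ztau4_mod2 p"
  have yq: "cong2 y (of_ztau4 q)" unfolding p q_def by (rule of_ztau4_mod2_cong2)
  have "of_ztau4 ztau4_zero = 0" by (simp add: ztau4_zero_def of_ztau_def vec4_eq_iff)
  then have "q \<noteq> ztau4_zero" using yq assms(3) by auto
  moreover have "(of_ztau4 q \<bullet> of_ztau4 q) / 4 \<in> Ztau"
    using inner_self_div4_if_cong2[OF assms(1) yq assms(2)] .
  then have "dot_self_dvd4 q"
    using of_ztau_div_in_Ztau_iff[of 4] by (simp add: of_ztau4_dot dot_self_dvd4_def)
  ultimately show ?thesis using that yq ztau4_mod2_in_residues unfolding q_def by blast
qed

lemma in_residue_span_cong2:
  assumes "in_residue_span u q" "cong2 y (of_ztau4 q)"
  shows "\<exists>\<alpha>\<in>Ztau. \<exists>\<beta>\<in>Ztau. cong2 y (\<alpha> *\<^sub>R vector [1, 1, 1, 1] + \<beta> *\<^sub>R of_ztau4 u)"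
proof -
  obtain \<alpha> \<beta> where q: "q = ztau4_mod2 (ztau4_add (ztau4_scale \<alpha> ones4) (ztau4_scale \<beta> u))"
    using assms(1) unfolding in_residue_span_def by blast
  have "of_ztau4 (ztau4_add (ztau4_scale \<alpha> ones4) (ztau4_scale \<beta> u))
      = of_ztau \<alpha> *\<^sub>R vector [1, 1, 1, 1] + of_ztau \<beta> *\<^sub>R of_ztau4 u"
    by (simp add: of_ztau4_add of_ztau4_scale of_ztau4_ones4)
  then have "cong2 (of_ztau \<alpha> *\<^sub>R vector [1, 1, 1, 1] + of_ztau \<beta> *\<^sub>R of_ztau4 u) (of_ztau4 q)"
    using of_ztau4_mod2_cong2 unfolding q by metis
  then show ?thesis using assms(2) cong2_sym cong2_trans of_ztau_in_Ztau by blast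
qed

lemma isotropic_in_A_or_A':
  assumes "y \<in> Ztau4" "(y \<bullet> y) / 4 \<in> Ztau" "\<not> cong2 y 0"
  shows "inAred tau tau' y \<or> inAred tau' tau y"
proof -
  obtain q where q: "q \<in> set ztau4_residues" "q \<noteq> ztau4_zero" "dot_self_dvd4 q" "cong2 y (of_ztau4 q)"
    using Ztau4_isotropic_residue assms by blast
  then have "in_residue_span ((0, 0), (1, 0), (1, -1), (0, 1)) q \<or> in_residue_span ((0, 0), (1, 0), (0, 1), (1, -1)) q"
    using isotropic_residues_in_A by (auto simp: list_all_iff)
  moreover have "of_ztau4 ((0, 0), (1, 0), (1, -1), (0, 1)) = vector [0, 1, tau', tau]"
    "of_ztau4 ((0, 0), (1, 0), (0, 1), (1, -1)) = vector [0, 1, tau, tau']"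
    by (simp_all add: of_ztau_def tau'_eq)
  ultimately show ?thesis
    using in_residue_span_cong2 q(4) assms(3) unfolding inAred_def by metis
qed

section \<open>The roots \<open>\<onehalf>(0, \<plusminus>1, \<plusminus>t', \<plusminus>t)\<close>\<close>

definition delta_base :: "real \<Rightarrow> real \<Rightarrow> real^4" where
  "delta_base t t' = vector [0, 1/2, t'/2, t/2]"

definition Delta96 :: "real \<Rightarrow> real \<Rightarrow> (real^4) set" where
  "Delta96 t t' = {x. \<exists>p s. p permutes UNIV \<and> evenperm p \<and> (\<forall>j. s j \<in> {-1::real, 1}) \<and>
     x = (\<chi> j. s j * delta_base t t' $ p j)}"

lemma Delta96_subset_DeltaGen: "Delta96 t t' \<subseteq> DeltaGen t t'"
  unfolding Delta96_def DeltaGen_def delta_base_def by blast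

lemma Delta96_memI:
  assumes "p permutes UNIV" "evenperm p" "\<forall>j. s j \<in> {-1::real, 1}"
  shows "(\<chi> j. s j * delta_base t t' $ p j) \<in> Delta96 t t'"
  unfolding Delta96_def using assms by (intro CollectI exI conjI) auto

lemma vec_rearrangement:
  fixes x v :: "'a^'n"
  assumes "inj (vec_nth v)" "inj (vec_nth x)" "range (vec_nth x) \<subseteq> range (vec_nth v)"
  shows "\<exists>p. p permutes UNIV \<and> x = (\<chi> j. v $ p j)"
proof -
  define p where "p = inv (vec_nth v) \<circ> vec_nth x"
  have "inj p"
    unfolding p_def using assms by (intro comp_inj_on inj_on_subset[OF inj_on_inv_into]) auto
  then have "bij p" by (simp add: bij_def finite_UNIV_inj_surj)
  then have "p permutes UNIV" by (auto intro: bij_imp_permutes)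
  moreover have "x $ j = v $ p j" for j
  proof -
    have "x $ j \<in> range (vec_nth v)" using assms(3) by auto
    then show ?thesis by (simp add: p_def f_inv_into_f)
  qed
  then have "x = (\<chi> j. v $ p j)" by (simp add: vec_eq_iff)
  ultimately show ?thesis by blast
qed

lemma permuted_delta_base_in_Delta96:
  assumes p: "p permutes (UNIV :: 4 set)"
  shows "(\<chi> j. delta_base t t' $ p j) \<in> Delta96 t t' \<union> Delta96 t' t"
proof (cases "evenperm p")
  case True
  then show ?thesis using Delta96_memI[OF p True, of "\<lambda>_. 1" t t'] by simp
next
  case False
  define q where "q = Transposition.transpose 3 4 \<circ> p"
  have q: "q permutes UNIV" unfolding q_def using p by (intro permutes_compose permutes_swap_id) auto
  have "permutation p" using p by (auto simp: permutation_permutes)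
  then have "evenperm q"
    using False unfolding q_def by (simp add: evenperm_comp evenperm_swap permutation_swap_id)
  moreover have "delta_base t t' $ k = delta_base t' t $ Transposition.transpose 3 4 k" for k :: 4
    using exhaust_4[of k] by (auto simp: delta_base_def)
  then have "(\<chi> j. delta_base t t' $ p j) = (\<chi> j. 1 * delta_base t' t $ q j)"
    by (simp add: q_def)
  ultimately show ?thesis using Delta96_memI[OF q, of "\<lambda>_. 1" t' t] by simp
qed

definition flip_coord :: "'n \<Rightarrow> real^'n \<Rightarrow> real^'n" where
  "flip_coord i x = (\<chi> j. if j = i then - x $ j else x $ j)"

lemma Delta96_flip_coord: "x \<in> Delta96 t t' \<Longrightarrow> flip_coord i x \<in> Delta96 t t'"
proof -
  assume "x \<in> Delta96 t t'"
  then obtain p s where ps: "p permutes UNIV" "evenperm p" "\<forall>j. s j \<in> {-1::real, 1}"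
    and x: "x = (\<chi> j. s j * delta_base t t' $ p j)" unfolding Delta96_def by blast
  define s' where "s' j = (if j = i then - s j else s j)" for j
  have "\<forall>j. s' j \<in> {-1::real, 1}" using ps(3) by (auto simp: s'_def)
  moreover have "flip_coord i x = (\<chi> j. s' j * delta_base t t' $ p j)"
    unfolding flip_coord_def x s'_def by (simp add: vec_eq_iff)
  ultimately show ?thesis unfolding Delta96_def using ps(1,2) by blast
qed

lemma inner_flip_coord: "y \<bullet> flip_coord i x = y \<bullet> x - 2 * (y $ i * x $ i)"
proof -
  have "flip_coord i x = x - (2 * x $ i) *\<^sub>R axis i 1"
    by (simp add: flip_coord_def vec_eq_iff axis_def)
  then show ?thesis by (simp add: inner_diff_right inner_axis)
qed

lemma Delta96_double_squares:
  assumes "x \<in> Delta96 t t'" "c \<in> {0, 1, t^2, t'^2}"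
  shows "\<exists>j. (2 * x $ j)^2 = c"
proof -
  obtain p s where p: "p permutes UNIV" and s: "\<forall>j. s j \<in> {-1::real, 1}"
    and x: "x = (\<chi> j. s j * delta_base t t' $ p j)" using assms(1) unfolding Delta96_def by blast
  have "(2 * delta_base t t' $ 1)^2 = 0" "(2 * delta_base t t' $ 2)^2 = 1"
    "(2 * delta_base t t' $ 3)^2 = t'^2" "(2 * delta_base t t' $ 4)^2 = t^2"
    by (simp_all add: delta_base_def)
  then obtain k where k: "(2 * delta_base t t' $ k)^2 = c" using assms(2) by blast
  have "(2 * x $ inv p k)^2 = (s (inv p k))^2 * (2 * delta_base t t' $ k)^2"
    unfolding x by (simp add: permutes_inverses(1)[OF p] power_mult_distrib algebra_simps)
  also have "\<dots> = c" using s[rule_format, of "inv p k"] k by auto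
  finally show ?thesis by blast
qed

lemma Delta96_double_in_Ztau4:
  assumes "t \<in> Ztau" "t' \<in> Ztau" "x \<in> Delta96 t t'"
  shows "2 *\<^sub>R x \<in> Ztau4"
proof -
  obtain p s where s: "\<forall>j. s j \<in> {-1::real, 1}"
    and x: "x = (\<chi> j. s j * delta_base t t' $ p j)" using assms(3) unfolding Delta96_def by blast
  have "2 * delta_base t t' $ k \<in> Ztau" for k :: 4
    using exhaust_4[of k] assms(1,2) by (auto simp: delta_base_def)
  moreover have "s j \<in> Ztau" for j using s[rule_format, of j] by auto
  ultimately show ?thesis unfolding x Ztau4_def by (auto simp: mult.left_commute[of 2])
qed

lemma Delta96_inner_self:
  assumes "t * t + t' * t' = 3" "x \<in> Delta96 t t'"
  shows "x \<bullet> x = 1"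
proof -
  obtain p s where p: "p permutes UNIV" and s: "\<forall>j. s j \<in> {-1::real, 1}"
    and x: "x = (\<chi> j. s j * delta_base t t' $ p j)" using assms(2) unfolding Delta96_def by blast
  have "x $ j * x $ j = (s j * s j) * (delta_base t t' $ p j * delta_base t t' $ p j)" for j
    unfolding x by (simp only: vec_lambda_beta mult_ac)
  moreover have "s j * s j = 1" for j using s[rule_format, of j] by auto
  ultimately have "x \<bullet> x = (\<Sum>j\<in>UNIV. (\<lambda>k. delta_base t t' $ k * delta_base t t' $ k) (p j))"
    unfolding inner_vec_def by simp
  also have "\<dots> = (\<Sum>k\<in>UNIV. delta_base t t' $ k * delta_base t t' $ k)"
    using sum.permute[OF p, of "\<lambda>k. delta_base t t' $ k * delta_base t t' $ k"] by (simp add: comp_def)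
  also have "\<dots> = 1" using assms(1) by (simp add: sum_4 delta_base_def field_simps)
  finally show ?thesis .
qed

lemma DeltaGen_inner_self:
  assumes "t * t + t' * t' = 3" "x \<in> DeltaGen t t'"
  shows "x \<bullet> x = 1"
  using assms(2) unfolding DeltaGen_def
proof (elim UnE CollectE exE conjE)
  fix i and s :: real
  assume "s \<in> {-1, 1}" "x = (\<chi> j. if j = i then s else 0)"
  then show "x \<bullet> x = 1" by (auto simp: inner_vec_def if_distrib cong: if_cong)
next
  assume "\<forall>j. x $ j \<in> {-1/2, 1/2}"
  then have h: "x $ j = -1/2 \<or> x $ j = 1/2" for j by auto
  have sq: "x $ j * x $ j = 1/4" for j using h[of j] by (elim disjE) (erule ssubst, simp)+
  show "x \<bullet> x = 1" unfolding inner4 sq by simp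
next
  fix p s
  assume "p permutes UNIV" "evenperm p" "\<forall>j. s j \<in> {-1::real, 1}"
    "x = (\<chi> j. s j * (vector [0, 1/2, t'/2, t/2] :: real^4) $ p j)"
  then have "x \<in> Delta96 t t'" using Delta96_memI[of p s t t'] by (simp add: delta_base_def)
  then show "x \<bullet> x = 1" using Delta96_inner_self assms(1) by blast
qed

lemma DeltaGen_double_in_Ztau4:
  assumes "t \<in> Ztau" "t' \<in> Ztau" "x \<in> DeltaGen t t'"
  shows "2 *\<^sub>R x \<in> Ztau4"
  using assms(3) unfolding DeltaGen_def
proof (elim UnE CollectE exE conjE)
  fix i and s :: real
  assume "s \<in> {-1, 1}" "x = (\<chi> j. if j = i then s else 0)"
  then show "2 *\<^sub>R x \<in> Ztau4" by (auto simp: Ztau4_def)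
next
  assume "\<forall>j. x $ j \<in> {-1/2, 1/2}"
  then have h: "x $ j = -1/2 \<or> x $ j = 1/2" for j by auto
  have "2 * x $ j \<in> Ztau" for j using h[of j] by (elim disjE) (erule ssubst, simp)+
  then show "2 *\<^sub>R x \<in> Ztau4" by (simp add: Ztau4_def)
next
  fix p s
  assume "p permutes UNIV" "evenperm p" "\<forall>j. s j \<in> {-1::real, 1}"
    "x = (\<chi> j. s j * (vector [0, 1/2, t'/2, t/2] :: real^4) $ p j)"
  then have "x \<in> Delta96 t t'" using Delta96_memI[of p s t t'] by (simp add: delta_base_def)
  then show "2 *\<^sub>R x \<in> Ztau4" using Delta96_double_in_Ztau4 assms(1,2) by blast
qed

lemma Delta_inner_self: "a \<in> Delta \<union> Delta' \<Longrightarrow> a \<bullet> a = 1"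
  using DeltaGen_inner_self tau_squares_sum unfolding Delta_def Delta'_def
  by (metis UnE add.commute)

lemma Delta_double_in_Ztau4: "a \<in> Delta \<union> Delta' \<Longrightarrow> 2 *\<^sub>R a \<in> Ztau4"
  using DeltaGen_double_in_Ztau4 unfolding Delta_def Delta'_def by blast

lemma S0_subset_Delta: "S0 \<subseteq> Delta"
  unfolding S0_def Delta_def DeltaGen_def by blast

lemma half_root_in_Delta:
  assumes "\<sigma> \<in> {-1, 1}"
  shows "(vector [0, \<sigma>/2, tau'/2, tau/2] :: real^4) \<in> Delta"
proof -
  have "(\<chi> j. (if j = 2 then \<sigma> else 1) * delta_base tau tau' $ id j) \<in> Delta96 tau tau'"
    by (intro Delta96_memI permutes_id evenperm_id) (use assms in auto)
  moreover have "(\<chi> j. (if j = 2 then \<sigma> else 1) * delta_base tau tau' $ id j) = vector [0, \<sigma>/2, tau'/2, tau/2]"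
    by (simp add: vec4_eq_iff delta_base_def)
  ultimately show ?thesis using Delta96_subset_DeltaGen unfolding Delta_def by auto
qed

section \<open>Halving by reflections\<close>

lemma refl_involutive: "a \<bullet> a = 1 \<Longrightarrow> refl a (refl a x) = x"
  unfolding refl_def by (simp add: inner_diff_left algebra_simps)

lemma inner_refl_refl: "a \<bullet> a = 1 \<Longrightarrow> refl a x \<bullet> refl a y = x \<bullet> y"
  unfolding refl_def by (simp add: inner_diff_left inner_diff_right inner_commute algebra_simps)

lemma refl_scaleR: "refl a (c *\<^sub>R x) = c *\<^sub>R refl a x"
  unfolding refl_def by (simp add: algebra_simps)

lemma inner_in_Ztau_if_cong2:
  assumes "x \<bullet> x = 1" "2 *\<^sub>R x \<in> Ztau4" "cong2 y (2 *\<^sub>R x)"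
  shows "y \<bullet> x \<in> Ztau"
proof -
  have "((1/2) *\<^sub>R (y - 2 *\<^sub>R x)) \<bullet> (2 *\<^sub>R x) = y \<bullet> x - 2"
    using assms(1) by (simp add: inner_diff_left)
  moreover have "((1/2) *\<^sub>R (y - 2 *\<^sub>R x)) \<bullet> (2 *\<^sub>R x) \<in> Ztau"
    using assms(2,3) unfolding cong2_iff_Ztau4 by blast
  ultimately have "y \<bullet> x - 2 + 2 \<in> Ztau" by (metis Ztau_add Ztau_numeral(1))
  then show ?thesis by simp
qed

lemma refl_half_in_Ztau4:
  assumes "2 *\<^sub>R x \<in> Ztau4" "cong2 y (2 *\<^sub>R x)" "rcong2 (y \<bullet> x) 1"
  shows "(1/2) *\<^sub>R refl x y \<in> Ztau4"
proof -
  have "(1/2) *\<^sub>R refl x y = (1/2) *\<^sub>R (y - 2 *\<^sub>R x) - ((y \<bullet> x - 1) / 2) *\<^sub>R (2 *\<^sub>R x)"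
    by (simp add: refl_def algebra_simps diff_divide_distrib)
  moreover have "(1/2) *\<^sub>R (y - 2 *\<^sub>R x) \<in> Ztau4" using assms(2) by (simp add: cong2_iff_Ztau4)
  moreover have "((y \<bullet> x - 1) / 2) *\<^sub>R (2 *\<^sub>R x) \<in> Ztau4"
    using assms(1,3) unfolding rcong2_def by blast
  ultimately show ?thesis by (metis Ztau4_diff)
qed

lemma cong2_double_flip_coord:
  assumes "2 *\<^sub>R x \<in> Ztau4" "cong2 y (2 *\<^sub>R x)"
  shows "cong2 y (2 *\<^sub>R flip_coord i x)"
  unfolding cong2_iff_rcong2
proof
  fix j
  have "rcong2 (y $ j) (2 * x $ j)" using assms(2) by (simp add: cong2_iff_rcong2)
  moreover have "rcong2 (2 * x $ j) (- (2 * x $ j))"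
    using assms(1) unfolding rcong2_def Ztau4_def by auto
  ultimately show "rcong2 (y $ j) ((2 *\<^sub>R flip_coord i x) $ j)"
    by (auto simp: flip_coord_def intro: rcong2_trans)
qed

text \<open>If \<open>y \<equiv> 2x\<close>, flipping the sign of \<open>x\<^sub>j\<close> changes \<open>y \<bullet> x\<close> by \<open>2y\<^sub>jx\<^sub>j \<equiv> (2x\<^sub>j)\<^sup>2\<close>; the squares
  \<open>0, 1, t\<^sup>2, t'\<^sup>2\<close> of the entries of \<open>2x\<close> meet every residue class, so one flip makes \<open>y \<bullet> x \<equiv> 1\<close>,
  and then \<open>r\<^sub>x(y) = y - (y \<bullet> x) 2x \<equiv> 2x - 2x = 0\<close>.\<close>

lemma Delta96_reflection_halves:
  assumes t: "t \<in> Ztau" "t' \<in> Ztau" "t * t + t' * t' = 3"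
    and cover: "\<forall>s\<in>Ztau. \<exists>c\<in>{0, 1, t^2, t'^2}. rcong2 s c"
    and x: "x \<in> Delta96 t t'" and y: "cong2 y (2 *\<^sub>R x)"
  shows "\<exists>x'\<in>Delta96 t t'. (1/2) *\<^sub>R refl x' y \<in> Ztau4"
proof -
  have x2: "2 *\<^sub>R x \<in> Ztau4" using Delta96_double_in_Ztau4[OF t(1,2) x] .
  have "y \<bullet> x \<in> Ztau"
    using inner_in_Ztau_if_cong2[OF Delta96_inner_self[OF t(3) x] x2 y] .
  then obtain c where c: "c \<in> {0, 1, t^2, t'^2}" "rcong2 (y \<bullet> x - 1) c"
    using cover by (meson Ztau_diff Ztau_numeral(4))
  obtain j where j: "(2 * x $ j)^2 = c" using Delta96_double_squares[OF x c(1)] by blast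
  define x' where "x' = flip_coord j x"
  have yj: "rcong2 (y $ j) (2 * x $ j)" using y by (simp add: cong2_iff_rcong2)
  have xj: "2 * x $ j \<in> Ztau" using x2 by (simp add: Ztau4_def)
  have "rcong2 (y $ j * (2 * x $ j)) ((2 * x $ j) * (2 * x $ j))"
    using rcong2_mult[OF yj rcong2_refl xj xj] .
  then have "rcong2 (y $ j * (2 * x $ j)) c" unfolding j[symmetric] power2_eq_square .
  then have "rcong2 (y \<bullet> x - y $ j * (2 * x $ j)) (y \<bullet> x - c)"
    by (intro rcong2_diff) simp_all
  moreover have "rcong2 (y \<bullet> x - c) 1"
    using c(2) by (simp add: rcong2_def algebra_simps)
  ultimately have "rcong2 (y \<bullet> x') 1"
    unfolding x'_def inner_flip_coord by (auto simp: algebra_simps intro: rcong2_trans)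
  moreover have "x' \<in> Delta96 t t'" unfolding x'_def using x by (rule Delta96_flip_coord)
  moreover have "cong2 y (2 *\<^sub>R x')" unfolding x'_def using x2 y by (rule cong2_double_flip_coord)
  ultimately show ?thesis using refl_half_in_Ztau4 Delta96_double_in_Ztau4[OF t(1,2)] by blast
qed

lemma Delta96_tau_reflection_halves:
  assumes "x \<in> Delta96 tau tau' \<union> Delta96 tau' tau" "cong2 y (2 *\<^sub>R x)"
  shows "\<exists>a\<in>Delta \<union> Delta'. (1/2) *\<^sub>R refl a y \<in> Ztau4"
  using assms(1)
proof
  assume "x \<in> Delta96 tau tau'"
  then obtain a where "a \<in> Delta96 tau tau'" "(1/2) *\<^sub>R refl a y \<in> Ztau4"
    using Delta96_reflection_halves[OF Ztau_tau Ztau_tau' tau_squares_sum Ztau_residues_squares _ assms(2)]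
    by blast
  then show ?thesis using Delta96_subset_DeltaGen unfolding Delta_def by blast
next
  assume "x \<in> Delta96 tau' tau"
  moreover have "tau' * tau' + tau * tau = 3" using tau_squares_sum by simp
  moreover have "\<forall>s\<in>Ztau. \<exists>c\<in>{0, 1, tau'^2, tau^2}. rcong2 s c"
    using Ztau_residues_squares by (simp add: insert_commute)
  ultimately obtain a where "a \<in> Delta96 tau' tau" "(1/2) *\<^sub>R refl a y \<in> Ztau4"
    using Delta96_reflection_halves[OF Ztau_tau' Ztau_tau _ _ _ assms(2)] by blast
  then show ?thesis using Delta96_subset_DeltaGen unfolding Delta'_def by blast
qed

text \<open>The residue \<open>\<tau>\<^sup>2 = 1 + \<tau>\<close> is represented by \<open>\<tau>' = 1 - \<tau>\<close>, so that residues with four distinct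
  entries lift to arrangements of \<open>(0, 1, \<tau>', \<tau>)\<close>.\<close>

definition lift_residue :: "ztau \<Rightarrow> real" where
  "lift_residue r = (if r = (1, 1) then tau' else of_ztau r)"

lemma lift_residue_rcong2: "rcong2 (of_ztau r) (lift_residue r)"
  by (simp add: lift_residue_def rcong2_def of_ztau_def tau'_eq)

lemma distinct_residue_lifts_to_root:
  assumes "q \<in> set ztau4_residues" "distinct (ztau4_entries q)"
  shows "\<exists>x \<in> Delta96 tau tau' \<union> Delta96 tau' tau. cong2 (of_ztau4 q) (2 *\<^sub>R x)"
proof -
  obtain a b c d where q: "q = (a, b, c, d)" by (cases q rule: prod_cases4)
  have abcd: "a \<in> set ztau_residues" "b \<in> set ztau_residues" "c \<in> set ztau_residues" "d \<in> set ztau_residues"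
    using assms(1) unfolding q ztau4_residues_def by auto
  have lift_values: "lift_residue ` set ztau_residues = {0, 1, tau, tau'}"
    by (auto simp: ztau_residues_def lift_residue_def of_ztau_def)
  have "inj_on lift_residue (set ztau_residues)"
    using tau_gt_1 tau'_lt_0 by (auto simp: inj_on_def ztau_residues_def lift_residue_def of_ztau_def)
  moreover have "set [a, b, c, d] \<subseteq> set ztau_residues" using abcd by simp
  ultimately have "inj_on lift_residue (set [a, b, c, d])" by (rule inj_on_subset)
  then have "distinct (map lift_residue [a, b, c, d])"
    using assms(2) unfolding q by (simp only: distinct_map ztau4_entries.simps)
  define x :: "real^4" where "x = vector [lift_residue a / 2, lift_residue b / 2, lift_residue c / 2, lift_residue d / 2]"
  have "inj (vec_nth x)"
    using \<open>distinct (map lift_residue [a, b, c, d])\<close> by (auto simp: inj_def forall_4 x_def)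
  moreover have "inj (vec_nth (delta_base tau tau'))"
    using tau_gt_1 tau'_lt_0 by (auto simp: inj_def forall_4 delta_base_def)
  moreover have "range (vec_nth x) \<subseteq> range (vec_nth (delta_base tau tau'))"
  proof -
    have "x $ i \<in> {0, 1/2, tau'/2, tau/2}" for i
      using abcd lift_values exhaust_4[of i] by (auto simp: x_def)
    moreover have "{0, 1/2, tau'/2, tau/2} \<subseteq> range (vec_nth (delta_base tau tau'))"
      by (auto simp: delta_base_def intro: range_eqI[of _ _ 1] range_eqI[of _ _ 2] range_eqI[of _ _ 3] range_eqI[of _ _ 4])
    ultimately show ?thesis by blast
  qed
  ultimately obtain p where "p permutes UNIV" "x = (\<chi> j. delta_base tau tau' $ p j)"
    using vec_rearrangement by blast
  then have "x \<in> Delta96 tau tau' \<union> Delta96 tau' tau" using permuted_delta_base_in_Delta96 by simp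
  moreover have "cong2 (of_ztau4 q) (2 *\<^sub>R x)"
    using lift_residue_rcong2 by (simp add: q x_def cong2_iff_rcong2 forall_4)
  ultimately show ?thesis by blast
qed

lemma one_reflection_halves:
  assumes y: "y \<in> Ztau4" "(y \<bullet> y) / 4 \<in> Ztau"
    and off_line: "\<forall>c. \<not> cong2 y (c *\<^sub>R vector [1, 1, 1, 1])"
  shows "\<exists>a\<in>Delta \<union> Delta'. (1/2) *\<^sub>R refl a y \<in> Ztau4"
proof -
  have "\<not> cong2 y 0" using off_line[rule_format, of 0] by simp
  then obtain q where q: "q \<in> set ztau4_residues" "q \<noteq> ztau4_zero" "dot_self_dvd4 q" "cong2 y (of_ztau4 q)"
    using Ztau4_isotropic_residue y by blast
  have "\<not> constant4 q"
  proof
    assume "constant4 q"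
    then obtain c where "q = (c, c, c, c)" by (cases q rule: prod_cases4) auto
    then have "of_ztau4 q = of_ztau c *\<^sub>R vector [1, 1, 1, 1]" by (simp add: vec4_eq_iff)
    then show False using q(4) off_line by metis
  qed
  then have "distinct (ztau4_entries q)"
    using isotropic_residues_distinct q(1-3) by (auto simp: list_all_iff)
  then obtain x where x: "x \<in> Delta96 tau tau' \<union> Delta96 tau' tau" "cong2 (of_ztau4 q) (2 *\<^sub>R x)"
    using distinct_residue_lifts_to_root q(1) by blast
  have "cong2 y (2 *\<^sub>R x)" using q(4) x(2) by (rule cong2_trans)
  then show ?thesis using Delta96_tau_reflection_halves x(1) by blast
qed

lemma refl_leaves_ones_line:
  assumes yc: "cong2 y (c *\<^sub>R vector [1, 1, 1, 1])" and a: "a $ 1 = 0" "2 * a $ 2 \<in> {-1, 1}"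
    and s: "\<not> rcong2 (y \<bullet> a) 0"
  shows "\<not> cong2 (refl a y) (d *\<^sub>R vector [1, 1, 1, 1])"
proof
  assume yd: "cong2 (refl a y) (d *\<^sub>R vector [1, 1, 1, 1])"
  define \<sigma> where "\<sigma> = 2 * a $ 2"
  have refl12: "refl a y $ 1 = y $ 1" "refl a y $ 2 = y $ 2 - (y \<bullet> a) * \<sigma>"
    by (simp_all add: refl_def a(1) \<sigma>_def)
  have c1: "rcong2 (y $ 1) c" and c2: "rcong2 (y $ 2) c"
    and d1: "rcong2 (y $ 1) d" and d2: "rcong2 (y $ 2 - (y \<bullet> a) * \<sigma>) d"
    using cong2_ones_nth[OF yc] cong2_ones_nth[OF yd] refl12 by metis+
  have "rcong2 c d" using rcong2_trans[OF rcong2_sym[OF c1] d1] .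
  then have "rcong2 (c - d) 0" by (simp add: rcong2_def)
  moreover have "rcong2 (y $ 2 - (y $ 2 - (y \<bullet> a) * \<sigma>)) (c - d)" using c2 d2 by (rule rcong2_diff)
  ultimately have "rcong2 ((y \<bullet> a) * \<sigma>) 0" by (simp add: rcong2_trans)
  moreover have "\<sigma> \<in> {-1, 1}" using a(2) by (simp add: \<sigma>_def)
  then have "\<sigma> \<in> Ztau" "\<sigma> * \<sigma> = 1" by auto
  ultimately have "rcong2 ((y \<bullet> a) * \<sigma> * \<sigma>) (0 * \<sigma>)" by (intro rcong2_mult) simp_all
  with \<open>\<sigma> * \<sigma> = 1\<close> s show False by (simp add: mult.assoc)
qed

text \<open>For \<open>y \<equiv> c(1,1,1,1)\<close> the roots \<open>u\<^sub>\<plusminus> = \<onehalf>(0, \<plusminus>1, \<tau>', \<tau>)\<close> satisfy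
  \<open>y \<bullet> u\<^sub>+ - y \<bullet> u\<^sub>- = y\<^sub>2 \<equiv> c \<not>\<equiv> 0\<close>, so one of the two reflections moves \<open>y\<close> off the line of \<open>(1,1,1,1)\<close>.\<close>

lemma ones_line_root_choice:
  assumes y: "y \<in> Ztau4" and yc: "cong2 y (c *\<^sub>R vector [1, 1, 1, 1])" and c: "\<not> rcong2 c 0"
  shows "\<exists>\<sigma>\<in>{-1, 1}. y \<bullet> vector [0, \<sigma>/2, tau'/2, tau/2] \<in> Ztau \<and> \<not> rcong2 (y \<bullet> vector [0, \<sigma>/2, tau'/2, tau/2]) 0"
proof -
  define u :: "real \<Rightarrow> real^4" where "u \<sigma> = vector [0, \<sigma>/2, tau'/2, tau/2]" for \<sigma>
  define e where "e = (1/2) *\<^sub>R (y - c *\<^sub>R vector [1, 1, 1, 1])"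
  have e: "e \<in> Ztau4" using yc by (simp add: e_def cong2_iff_Ztau4)
  have "c = y $ 1 - 2 * e $ 1" by (simp add: e_def field_simps)
  then have c_Ztau: "c \<in> Ztau" using y e by (auto simp: Ztau4_def)
  have y_eq: "y = 2 *\<^sub>R e + c *\<^sub>R vector [1, 1, 1, 1]" by (simp add: e_def)
  have dot: "y \<bullet> u \<sigma> = e \<bullet> (2 *\<^sub>R u \<sigma>) + c * (\<sigma> + 1) / 2" for \<sigma>
    unfolding y_eq u_def tau'_eq by (simp add: inner_add_left inner4 field_simps)
  have u2: "2 *\<^sub>R u \<sigma> \<in> Ztau4" if "\<sigma> \<in> {-1, 1}" for \<sigma>
    using half_root_in_Delta[OF that] Delta_double_in_Ztau4 unfolding u_def by auto
  have "y \<bullet> u 1 = e \<bullet> (2 *\<^sub>R u 1) + c" "y \<bullet> u (-1) = e \<bullet> (2 *\<^sub>R u (-1))"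
    using dot[of 1] dot[of "-1"] by simp_all
  then have s_Ztau: "y \<bullet> u \<sigma> \<in> Ztau" if "\<sigma> \<in> {-1, 1}" for \<sigma>
    using that Ztau4_inner[OF e u2[of 1]] Ztau4_inner[OF e u2[of "-1"]] c_Ztau by auto
  have "\<not> (rcong2 (y \<bullet> u 1) 0 \<and> rcong2 (y \<bullet> u (-1)) 0)"
  proof
    assume "rcong2 (y \<bullet> u 1) 0 \<and> rcong2 (y \<bullet> u (-1)) 0"
    then have "rcong2 (y \<bullet> u 1 - y \<bullet> u (-1)) (0 - 0)" by (intro rcong2_diff) auto
    moreover have "y \<bullet> u 1 - y \<bullet> u (-1) = y $ 2" by (simp add: u_def inner4 field_simps)
    ultimately have "rcong2 (y $ 2) 0" by simp
    with rcong2_sym[OF cong2_ones_nth[OF yc, of 2]] have "rcong2 c 0" by (rule rcong2_trans)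
    with c show False ..
  qed
  then show ?thesis using s_Ztau unfolding u_def by blast
qed

lemma reflection_off_ones_line:
  assumes y: "y \<in> Ztau4" and yc: "cong2 y (c *\<^sub>R vector [1, 1, 1, 1])" and c: "\<not> rcong2 c 0"
  shows "\<exists>a\<in>Delta. refl a y \<in> Ztau4 \<and> (\<forall>d. \<not> cong2 (refl a y) (d *\<^sub>R vector [1, 1, 1, 1]))"
proof -
  obtain \<sigma> where \<sigma>: "\<sigma> \<in> {-1, 1}" and a: "y \<bullet> vector [0, \<sigma>/2, tau'/2, tau/2] \<in> Ztau"
    "\<not> rcong2 (y \<bullet> vector [0, \<sigma>/2, tau'/2, tau/2]) 0"
    using ones_line_root_choice[OF assms] by blast
  define u :: "real^4" where "u = vector [0, \<sigma>/2, tau'/2, tau/2]"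
  have u: "u \<in> Delta" "2 *\<^sub>R u \<in> Ztau4"
    using half_root_in_Delta[OF \<sigma>] Delta_double_in_Ztau4 unfolding u_def by auto
  have "refl u y = y - (y \<bullet> u) *\<^sub>R (2 *\<^sub>R u)" by (simp add: refl_def)
  also have "\<dots> \<in> Ztau4" using y u(2) a(1) unfolding u_def by blast
  finally have "refl u y \<in> Ztau4" .
  moreover have "\<not> cong2 (refl u y) (d *\<^sub>R vector [1, 1, 1, 1])" for d
    using refl_leaves_ones_line[OF yc _ _ a(2)] \<sigma> by (simp add: u_def)
  ultimately show ?thesis using u(1) by blast
qed

section \<open>The group \<open>H\<^sup>\<infinity>\<close>\<close>

lemma Hinf_scaleR: "w \<in> Hinf \<Longrightarrow> w (c *\<^sub>R x) = c *\<^sub>R w x"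
  by (induction rule: Hinf.induct) (simp_all add: refl_scaleR)

lemma Hinf_inner: "w \<in> Hinf \<Longrightarrow> w x \<bullet> w y = x \<bullet> y"
  by (induction rule: Hinf.induct) (simp_all add: inner_refl_refl Delta_inner_self)

lemma Delta_subset_Sigma: "Delta \<union> Delta' \<subseteq> Sigma"
proof
  fix a assume "a \<in> Delta \<union> Delta'"
  then have "a = id a \<and> id \<in> Hinf \<and> a \<in> Delta \<union> Delta'" using Hinf_id by simp
  then show "a \<in> Sigma" unfolding Sigma_def by blast
qed

lemma Sigma_refl:
  assumes "x \<in> Sigma" "a \<in> Delta \<union> Delta'"
  shows "refl a x \<in> Sigma"
proof -
  obtain w b where "x = w b" "w \<in> Hinf" "b \<in> Delta \<union> Delta'" using assms(1) unfolding Sigma_def by blast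
  then have "refl a x = (refl a \<circ> w) b \<and> refl a \<circ> w \<in> Hinf \<and> b \<in> Delta \<union> Delta'"
    using assms(2) Hinf_step by simp
  then show ?thesis unfolding Sigma_def by blast
qed

lemma Sigma_if_Hinf_image: "w \<in> Hinf \<Longrightarrow> w x \<in> Sigma \<Longrightarrow> x \<in> Sigma"
proof (induction rule: Hinf.induct)
  case (Hinf_step w a)
  then have "refl a (refl a (w x)) \<in> Sigma" by (simp add: Sigma_refl)
  then show ?case using Hinf_step by (simp add: refl_involutive Delta_inner_self)
qed simp

lemma Hinf_halves:
  assumes y: "y \<in> Ztau4" "(y \<bullet> y) / 4 \<in> Ztau" and "\<not> cong2 y 0"
  shows "\<exists>w\<in>Hinf. (1/2) *\<^sub>R w y \<in> Ztau4"
proof (cases "\<exists>c. cong2 y (c *\<^sub>R vector [1, 1, 1, 1])")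
  case False
  then obtain a where "a \<in> Delta \<union> Delta'" "(1/2) *\<^sub>R refl a y \<in> Ztau4"
    using one_reflection_halves y by blast
  then show ?thesis using Hinf_step[OF Hinf_id] by (intro bexI[of _ "refl a \<circ> id"]) simp_all
next
  case True
  then obtain c where yc: "cong2 y (c *\<^sub>R vector [1, 1, 1, 1])" by blast
  have "\<not> rcong2 c 0"
  proof
    assume "rcong2 c 0"
    then have "cong2 (c *\<^sub>R vector [1, 1, 1, 1]) 0" by (simp add: cong2_iff_rcong2)
    with yc \<open>\<not> cong2 y 0\<close> show False using cong2_trans by blast
  qed
  then obtain a where a: "a \<in> Delta" "refl a y \<in> Ztau4"
    "\<forall>d. \<not> cong2 (refl a y) (d *\<^sub>R vector [1, 1, 1, 1])"
    using reflection_off_ones_line[OF y(1) yc] by blast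
  have "refl a y \<bullet> refl a y = y \<bullet> y" using a(1) by (simp add: inner_refl_refl Delta_inner_self)
  then obtain a' where "a' \<in> Delta \<union> Delta'" "(1/2) *\<^sub>R refl a' (refl a y) \<in> Ztau4"
    using one_reflection_halves[OF a(2) _ a(3)] y(2) by auto
  moreover have "refl a' \<circ> (refl a \<circ> id) \<in> Hinf"
    using a(1) \<open>a' \<in> Delta \<union> Delta'\<close> by (intro Hinf_step Hinf_id) auto
  ultimately show ?thesis by (intro bexI[of _ "refl a' \<circ> (refl a \<circ> id)"]) simp_all
qed

section \<open>Dyadic unit vectors\<close>

definition dyadic_sphere :: "(real^4) set" where
  "dyadic_sphere = {x. x \<bullet> x = 1 \<and> (\<exists>k. 2 ^ k *\<^sub>R x \<in> Ztau4)}"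

lemma Rring_iff: "r \<in> Rring \<longleftrightarrow> (\<exists>n. 2 ^ n * r \<in> Ztau)"
proof
  assume "r \<in> Rring"
  then obtain a b n where "r = (of_int a + of_int b * tau) / 2 ^ n" unfolding Rring_def by blast
  then have "2 ^ n * r = of_int a + of_int b * tau" by simp
  then show "\<exists>n. 2 ^ n * r \<in> Ztau" unfolding Ztau_def by blast
next
  assume "\<exists>n. 2 ^ n * r \<in> Ztau"
  then obtain a b n where "2 ^ n * r = of_int a + of_int b * tau" unfolding Ztau_def by blast
  then have "r = (of_int a + of_int b * tau) / 2 ^ n" by (simp add: field_simps)
  then show "r \<in> Rring" unfolding Rring_def by blast
qed

lemma Ztau_power2_mono: "2 ^ n * r \<in> Ztau \<Longrightarrow> n \<le> m \<Longrightarrow> 2 ^ m * r \<in> Ztau"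
proof -
  assume "2 ^ n * r \<in> Ztau" "n \<le> m"
  moreover have "2 ^ m * r = 2 ^ (m - n) * (2 ^ n * r)"
    using \<open>n \<le> m\<close> by (simp add: power_add[symmetric])
  ultimately show ?thesis by (metis Ztau_mult Ztau_numeral(1) Ztau_power)
qed

lemma Rring4_iff: "(\<forall>i. x $ i \<in> Rring) \<longleftrightarrow> (\<exists>k. 2 ^ k *\<^sub>R x \<in> Ztau4)"
proof
  assume "\<forall>i. x $ i \<in> Rring"
  then obtain n where n: "\<And>i. 2 ^ n i * x $ i \<in> Ztau" unfolding Rring_iff by metis
  have "2 ^ (\<Sum>j\<in>UNIV. n j) * x $ i \<in> Ztau" for i
    using n by (rule Ztau_power2_mono) (simp add: member_le_sum)
  then show "\<exists>k. 2 ^ k *\<^sub>R x \<in> Ztau4" unfolding Ztau4_def by auto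
qed (auto simp: Rring_iff Ztau4_def)

lemma refl_dyadic:
  assumes "2 *\<^sub>R a \<in> Ztau4" "2 ^ k *\<^sub>R x \<in> Ztau4"
  shows "2 ^ Suc k *\<^sub>R refl a x \<in> Ztau4"
proof -
  have "2 ^ Suc k *\<^sub>R refl a x = 2 *\<^sub>R (2 ^ k *\<^sub>R x) - ((2 ^ k *\<^sub>R x) \<bullet> (2 *\<^sub>R a)) *\<^sub>R (2 *\<^sub>R a)"
    by (simp add: refl_def algebra_simps)
  also have "\<dots> \<in> Ztau4" using assms by blast
  finally show ?thesis .
qed

lemma Hinf_dyadic: "w \<in> Hinf \<Longrightarrow> 2 ^ k *\<^sub>R x \<in> Ztau4 \<Longrightarrow> \<exists>m. 2 ^ m *\<^sub>R w x \<in> Ztau4"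
proof (induction arbitrary: k rule: Hinf.induct)
  case (Hinf_step w a)
  then obtain m where "2 ^ m *\<^sub>R w x \<in> Ztau4" by blast
  with Delta_double_in_Ztau4[OF Hinf_step.hyps(2)] have "2 ^ Suc m *\<^sub>R refl a (w x) \<in> Ztau4"
    by (rule refl_dyadic)
  then show ?case by (metis comp_apply)
qed auto

lemma sphere_Rring_eq_dyadic_sphere: "sphere 0 1 \<inter> {x :: real^4. \<forall>i. x $ i \<in> Rring} = dyadic_sphere"
  by (auto simp: dyadic_sphere_def norm_eq_1 Rring4_iff)

lemma Sigma_subset_dyadic_sphere: "Sigma \<subseteq> dyadic_sphere"
proof
  fix x assume "x \<in> Sigma"
  then obtain w a where x: "x = w a" "w \<in> Hinf" "a \<in> Delta \<union> Delta'" unfolding Sigma_def by blast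
  have "2 ^ 1 *\<^sub>R a \<in> Ztau4" using Delta_double_in_Ztau4[OF x(3)] by simp
  then have "\<exists>k. 2 ^ k *\<^sub>R x \<in> Ztau4" unfolding x(1) by (rule Hinf_dyadic[OF x(2)])
  moreover have "x \<bullet> x = 1" unfolding x(1) using Hinf_inner[OF x(2)] Delta_inner_self[OF x(3)] by simp
  ultimately show "x \<in> dyadic_sphere" unfolding dyadic_sphere_def by blast
qed

lemma int_unit_norm:
  fixes a b :: "'i \<Rightarrow> int"
  assumes I: "finite I" and norm: "(\<Sum>i\<in>I. a i ^ 2 + b i ^ 2) = 1"
    and tau_part: "(\<Sum>i\<in>I. 2 * a i * b i + b i ^ 2) = 0"
  shows "(\<forall>i\<in>I. b i = 0) \<and> (\<exists>i\<in>I. a i ^ 2 = 1 \<and> (\<forall>j\<in>I - {i}. a j = 0))"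
proof -
  have one_le: "z \<noteq> 0 \<Longrightarrow> 1 \<le> z ^ 2" for z :: int
    using zero_less_power2[of z] by linarith
  have le1: "a i ^ 2 + b i ^ 2 \<le> 1" if "i \<in> I" for i
    using member_le_sum[of i I "\<lambda>i. a i ^ 2 + b i ^ 2"] I norm that by simp
  have "a i * b i = 0" if "i \<in> I" for i
    using le1[OF that] one_le[of "a i"] one_le[of "b i"] by (cases "a i = 0") auto
  then have "(\<Sum>i\<in>I. 2 * a i * b i + b i ^ 2) = (\<Sum>i\<in>I. b i ^ 2)"
    by (intro sum.cong) (auto simp: mult.assoc)
  then have "(\<Sum>i\<in>I. b i ^ 2) = 0" using tau_part by simp
  then have b0: "\<forall>i\<in>I. b i = 0" using I by (simp add: sum_nonneg_eq_0_iff)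
  then have sum_a: "(\<Sum>i\<in>I. a i ^ 2) = 1" using norm by simp
  then obtain i where i: "i \<in> I" "a i \<noteq> 0" by (metis (mono_tags, lifting) sum.neutral power_zero_numeral zero_neq_one)
  have "a i ^ 2 = 1" using le1[OF i(1)] one_le[OF i(2)] b0 i(1) by simp
  moreover have "a j = 0" if "j \<in> I - {i}" for j
  proof -
    have "(\<Sum>k\<in>{i, j}. a k ^ 2) \<le> (\<Sum>k\<in>I. a k ^ 2)"
      using that i(1) I by (intro sum_mono2) auto
    moreover have "j \<noteq> i" using that by blast
    ultimately have "a j ^ 2 \<le> 0" using sum_a \<open>a i ^ 2 = 1\<close> by simp
    then show ?thesis by simp
  qed
  ultimately show ?thesis using b0 i(1) by blast
qed

lemma unit_Ztau4_in_S0: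
  assumes "x \<in> Ztau4" "x \<bullet> x = 1"
  shows "x \<in> S0"
proof -
  have "\<forall>i. \<exists>p. x $ i = of_ztau p" using assms(1) unfolding Ztau4_def Ztau_iff by blast
  then obtain f where f: "\<And>i. x $ i = of_ztau (f i)" by metis
  define a b where "a i = fst (f i)" and "b i = snd (f i)" for i
  have sq: "x $ i * x $ i = of_int (a i ^ 2 + b i ^ 2) + of_int (2 * a i * b i + b i ^ 2) * tau" for i
    unfolding f of_ztau_mul[symmetric] a_def b_def
    by (cases "f i") (simp add: of_ztau_def power2_eq_square algebra_simps)
  have "of_ztau (\<Sum>i\<in>UNIV. a i ^ 2 + b i ^ 2, \<Sum>i\<in>UNIV. 2 * a i * b i + b i ^ 2) = x \<bullet> x"
    unfolding inner_vec_def inner_real_def sq of_ztau_def by (simp add: sum.distrib sum_distrib_right distrib_right)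
  also have "\<dots> = of_ztau (1, 0)" using assms(2) by (simp add: of_ztau_def)
  finally have "(\<Sum>i\<in>UNIV. a i ^ 2 + b i ^ 2) = 1" "(\<Sum>i\<in>UNIV. 2 * a i * b i + b i ^ 2) = 0"
    by (simp_all add: of_ztau_inject)
  from int_unit_norm[OF finite_class.finite_UNIV this] obtain i
    where b0: "\<forall>i. b i = 0" and ai: "a i ^ 2 = 1" and aj: "\<forall>j. j \<noteq> i \<longrightarrow> a j = 0" by auto
  have "x = (\<chi> j. if j = i then of_int (a i) else 0)"
    using b0 aj by (auto simp: vec_eq_iff f of_ztau_def a_def b_def)
  moreover have "(of_int (a i) :: real) \<in> {-1, 1}" using ai by (auto simp: power2_eq_1_iff)
  ultimately show ?thesis unfolding S0_def by blast
qed

lemma scaled_unit_norm_div4: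
  assumes "x \<bullet> x = 1"
  shows "((2 ^ Suc k *\<^sub>R x) \<bullet> (2 ^ Suc k *\<^sub>R x)) / 4 \<in> Ztau"
proof -
  have "((2 ^ Suc k *\<^sub>R x) \<bullet> (2 ^ Suc k *\<^sub>R x)) / 4 = 2 ^ k * 2 ^ k" using assms by simp
  then show ?thesis by (metis Ztau_mult Ztau_numeral(1) Ztau_power)
qed

section \<open>Descent\<close>

lemma dyadic_unit_in_Sigma: "2 ^ k *\<^sub>R x \<in> Ztau4 \<Longrightarrow> x \<bullet> x = 1 \<Longrightarrow> x \<in> Sigma"
proof (induction k arbitrary: x)
  case 0
  then have "x \<in> S0" using unit_Ztau4_in_S0 by simp
  then show ?case using S0_subset_Delta Delta_subset_Sigma by blast
next
  case (Suc k)
  show ?case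
  proof (cases "cong2 (2 ^ Suc k *\<^sub>R x) 0")
    case True
    then have "2 ^ k *\<^sub>R x \<in> Ztau4" by (simp add: cong2_iff_Ztau4)
    then show ?thesis using Suc by blast
  next
    case False
    then obtain w where w: "w \<in> Hinf" "(1/2) *\<^sub>R w (2 ^ Suc k *\<^sub>R x) \<in> Ztau4"
      using Hinf_halves Suc.prems scaled_unit_norm_div4 by blast
    then have "2 ^ k *\<^sub>R w x \<in> Ztau4" by (simp add: Hinf_scaleR)
    moreover have "w x \<bullet> w x = 1" using Hinf_inner[OF w(1)] Suc.prems(2) by simp
    ultimately have "w x \<in> Sigma" by (rule Suc.IH)
    then show ?thesis using Sigma_if_Hinf_image w(1) by blast
  qed
qed

lemma dyadic_unit_in_S: "2 ^ k *\<^sub>R x \<in> Ztau4 \<Longrightarrow> x \<bullet> x = 1 \<Longrightarrow> x \<in> (\<Union>n. S n \<union> S' n)"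
proof (induction k)
  case 0
  then have "x \<in> S 0" using unit_Ztau4_in_S0 by (simp add: S_def SGen_def)
  then show ?case by blast
next
  case (Suc k)
  show ?case
  proof (cases "cong2 (2 ^ Suc k *\<^sub>R x) 0")
    case True
    then have "2 ^ k *\<^sub>R x \<in> Ztau4" by (simp add: cong2_iff_Ztau4)
    then show ?thesis using Suc by blast
  next
    case False
    then have "inAred tau tau' (2 ^ Suc k *\<^sub>R x) \<or> inAred tau' tau (2 ^ Suc k *\<^sub>R x)"
      using isotropic_in_A_or_A' Suc.prems scaled_unit_norm_div4 by blast
    then have "x \<in> S (Suc k) \<union> S' (Suc k)"
      using Suc.prems unfolding S_def S'_def SGen_def Ztau4_def by auto
    then show ?thesis by blast
  qed
qed

lemma S_subset_dyadic_sphere: "S n \<union> S' n \<subseteq> dyadic_sphere"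
proof (cases "n = 0")
  case True
  have "x \<bullet> x = 1 \<and> (\<exists>k. 2 ^ k *\<^sub>R x \<in> Ztau4)" if "x \<in> S0" for x
  proof -
    have "x \<in> Delta \<union> Delta'" using that S0_subset_Delta by blast
    then have "x \<bullet> x = 1" "2 ^ 1 *\<^sub>R x \<in> Ztau4" using Delta_inner_self Delta_double_in_Ztau4 by simp_all
    then show ?thesis by blast
  qed
  then show ?thesis using True unfolding S_def S'_def SGen_def dyadic_sphere_def by auto
next
  case False
  then show ?thesis unfolding S_def S'_def SGen_def Ztau4_def dyadic_sphere_def by auto
qed

theorem mainTheorem6:
  shows "Sigma = (\<Union>n. S n \<union> S' n) \<and>
         (\<Union>n. S n \<union> S' n) = sphere 0 1 \<inter> {x :: real^4. \<forall>i. x $ i \<in> Rring}"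
proof -
  have "Sigma = dyadic_sphere"
    using Sigma_subset_dyadic_sphere dyadic_unit_in_Sigma unfolding dyadic_sphere_def by blast
  moreover have "(\<Union>n. S n \<union> S' n) = dyadic_sphere"
    using S_subset_dyadic_sphere dyadic_unit_in_S unfolding dyadic_sphere_def by blast
  ultimately show ?thesis using sphere_Rring_eq_dyadic_sphere by simp
qed

end
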